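(* Let $\mathbb{S}$ be the Sorgenfrey line. The symmetric product $\mathcal{F}_2(\mathbb{S})$ is homeomorphic to $\mathbb{S}^2$. In particular, $\mathcal{F}_2(\mathbb{S})$ is homogeneous.
   Context: The Sorgenfrey line $\mathbb{S}$ is the real line with the topology generated by half-open intervals $[a,b[$. For a space $X$, $\mathcal{F}_2(X)$ denotes the set of all nonempty subsets of $X$ of cardinality at most $2$, with the subspace topology inherited from the hyperspace of closed subsets of $X$ with the Vietoris topology. A space $Y$ is homogeneous if for all $x,y\in Y$ there is a homeomorphism $h:Y\to Y$ with $h(x)=y$. *)

theory Defs
  imports "HOL-Analysis.Analysis"
begin

definition sorgenfrey :: "real topology" where
  "sorgenfrey = topology_generated_by {{a..<b} | a b. a < b}"

definition vietoris :: "'a topology \<Rightarrow> 'a set topology" where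
  "vietoris X = topology_generated_by
     ({{A. closedin X A \<and> A \<subseteq> U} | U. openin X U} \<union>
      {{A. closedin X A \<and> A \<inter> U \<noteq> {}} | U. openin X U})"

definition F2 :: "'a topology \<Rightarrow> 'a set topology" where
  "F2 X = subtopology (vietoris X)
     {A. A \<subseteq> topspace X \<and> A \<noteq> {} \<and> finite A \<and> card A \<le> 2}"

definition homogeneous_space :: "'a topology \<Rightarrow> bool" where
  "homogeneous_space Y \<longleftrightarrow>
     (\<forall>x\<in>topspace Y. \<forall>y\<in>topspace Y. \<exists>h. homeomorphic_map Y Y h \<and> h x = y)"

end

theory Submission
  imports Defs
begin

text \<open>
  The map \<open>{a, b} \<mapsto> (min a b, max a b)\<close> identifies \<open>F\<^sub>2(S)\<close> with the closed half-plane
  \<open>a \<le> b\<close> of \<open>S\<^sup>2\<close>: the Vietoris neighbourhood of \<open>{a, b}\<close> built from \<open>[a, a + e[\<close> and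
  \<open>[b, b + e[\<close> forces minimum and maximum into these intervals.

  The closed half-plane is in turn homeomorphic to \<open>S\<^sup>2\<close>. Off the diagonal it is the disjoint
  union of the clopen vertical segments \<open>{a} \<times> [c, c + s[\<close>, where \<open>c\<close> is the coarsest dyadic
  rational in \<open>]a, b]\<close> and \<open>s\<close> the mesh of its level. Stretching each segment by the factor 2,
  keeping its lower half vertical and laying its upper half horizontally onto \<open>[c, c + s[ \<times> {a}\<close>,
  fills the open half-plane below the diagonal as well. The segments starting near a diagonal
  point are short, which makes this folding continuous on the diagonal, where it is the identity.

  Homogeneity follows since \<open>S\<close> is homogeneous by translations, hence so is \<open>S\<^sup>2\<close>.
\<close>

lemma homogeneous_space_prod_topology:
  assumes "homogeneous_space X" "homogeneous_space Y"
  shows "homogeneous_space (prod_topology X Y)"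
  unfolding homogeneous_space_def
proof clarsimp
  fix x y x' y'
  assume "x \<in> topspace X" "y \<in> topspace Y" "x' \<in> topspace X" "y' \<in> topspace Y"
  then obtain f g where "homeomorphic_map X X f" "f x = x'" "homeomorphic_map Y Y g" "g y = y'"
    using assms unfolding homogeneous_space_def by meson
  then obtain f' g' where "homeomorphic_maps X X f f'" "homeomorphic_maps Y Y g g'"
    by (meson homeomorphic_map_maps)
  then have "homeomorphic_map (prod_topology X Y) (prod_topology X Y) (\<lambda>(x, y). (f x, g y))"
    using homeomorphic_maps_prod homeomorphic_map_maps by blast
  then show "\<exists>h. homeomorphic_map (prod_topology X Y) (prod_topology X Y) h \<and> h (x, y) = (x', y')"
    using \<open>f x = x'\<close> \<open>g y = y'\<close> by force
qed

lemma homogeneous_space_homeomorphic: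
  assumes "X homeomorphic_space Y" "homogeneous_space Y"
  shows "homogeneous_space X"
  unfolding homogeneous_space_def
proof (intro ballI)
  fix x y assume x: "x \<in> topspace X" and y: "y \<in> topspace X"
  obtain f g where fg: "homeomorphic_maps X Y f g"
    using assms(1) unfolding homeomorphic_space_def by blast
  then have f: "homeomorphic_map X Y f" and g: "homeomorphic_map Y X g"
    by (auto simp: homeomorphic_maps_map)
  have "f x \<in> topspace Y" "f y \<in> topspace Y"
    using x y fg unfolding homeomorphic_maps_def continuous_map_def by auto
  then obtain k where k: "homeomorphic_map Y Y k" "k (f x) = f y"
    using assms(2) unfolding homogeneous_space_def by blast
  have "homeomorphic_map X X (g \<circ> k \<circ> f)"
    using f g k by (intro homeomorphic_map_compose)
  moreover have "(g \<circ> k \<circ> f) x = y"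
    using k fg y unfolding homeomorphic_maps_def by simp
  ultimately show "\<exists>h. homeomorphic_map X X h \<and> h x = y" by blast
qed

section \<open>The Sorgenfrey line and plane\<close>

lemma openin_sorgenfrey:
  "openin sorgenfrey U \<longleftrightarrow> (\<forall>x\<in>U. \<exists>e>0. {x..<x + e} \<subseteq> U)"
proof
  assume "openin sorgenfrey U"
  then have "generate_topology_on {{a..<b} | a b. a < b} U"
    unfolding sorgenfrey_def by (simp add: openin_topology_generated_by_iff)
  then show "\<forall>x\<in>U. \<exists>e>0. {x..<x + e} \<subseteq> U"
  proof induct
    case (Int V W)
    show ?case
    proof
      fix x assume "x \<in> V \<inter> W"
      then obtain e1 e2 where "e1 > 0" "{x..<x + e1} \<subseteq> V" "e2 > 0" "{x..<x + e2} \<subseteq> W"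
        using Int by blast
      then show "\<exists>e>0. {x..<x + e} \<subseteq> V \<inter> W"
        by (intro exI[of _ "min e1 e2"]) (auto simp: subset_eq)
    qed
  next
    case (Basis s)
    then obtain a b where "s = {a..<b}" by blast
    then show ?case by (auto intro!: exI[where x = "b - _"])
  qed blast+
next
  assume "\<forall>x\<in>U. \<exists>e>0. {x..<x + e} \<subseteq> U"
  then obtain e where e: "\<And>x. x \<in> U \<Longrightarrow> e x > 0 \<and> {x..<x + e x} \<subseteq> U" by metis
  then have U: "U = (\<Union>x\<in>U. {x..<x + e x})" by force
  have "generate_topology_on {{a..<b} | a b. a < b} (\<Union>x\<in>U. {x..<x + e x})"
    using e by (force intro: generate_topology_on.UN generate_topology_on.Basis)
  then show "openin sorgenfrey U"
    unfolding sorgenfrey_def by (subst U) (simp add: openin_topology_generated_by_iff)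
qed

lemma openin_sorgenfrey_atLeastLessThan: "openin sorgenfrey {a..<b}"
  unfolding openin_sorgenfrey by (auto intro!: exI[where x = "b - _"])

lemma openin_sorgenfrey_if_open:
  assumes "open U" shows "openin sorgenfrey U"
  unfolding openin_sorgenfrey
proof
  fix x assume "x \<in> U"
  then obtain e where "e > 0" "\<And>y. \<bar>y - x\<bar> < e \<Longrightarrow> y \<in> U"
    using assms unfolding open_real by metis
  then show "\<exists>e>0. {x..<x + e} \<subseteq> U" by (intro exI[of _ e]) auto
qed

lemma topspace_sorgenfrey [simp]: "topspace sorgenfrey = UNIV"
  using openin_sorgenfrey_if_open[OF open_UNIV] openin_subset by blast

lemma t1_space_sorgenfrey: "t1_space sorgenfrey"
  by (rule t1_space_expansive[OF _ _ t1_space_euclidean]) (simp_all add: openin_sorgenfrey_if_open)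

lemma homeomorphic_map_sorgenfrey_translate:
  "homeomorphic_map sorgenfrey sorgenfrey (\<lambda>x. x + c)"
proof -
  have translate: "continuous_map sorgenfrey sorgenfrey (\<lambda>x. x + t)" for t :: real
  proof -
    have "openin sorgenfrey ((\<lambda>x. x + t) -` U)" if U: "openin sorgenfrey U" for U
      unfolding openin_sorgenfrey
    proof
      fix x assume "x \<in> (\<lambda>x. x + t) -` U"
      then have "x + t \<in> U" by simp
      then obtain e where "e > 0" "{x + t..<x + t + e} \<subseteq> U"
        using U unfolding openin_sorgenfrey by blast
      then show "\<exists>e>0. {x..<x + e} \<subseteq> (\<lambda>x. x + t) -` U"
        by (intro exI[of _ e]) (auto simp: subset_eq)
    qed
    then show ?thesis by (simp add: continuous_map_openin_preimage_eq)
  qed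
  have "homeomorphic_maps sorgenfrey sorgenfrey (\<lambda>x. x + c) (\<lambda>x. x + - c)"
    unfolding homeomorphic_maps_def using translate[of c] translate[of "- c"] by simp
  then show ?thesis by (rule homeomorphic_maps_imp_map)
qed

lemma homogeneous_space_sorgenfrey: "homogeneous_space sorgenfrey"
  unfolding homogeneous_space_def
proof (intro ballI)
  fix x y :: real
  show "\<exists>h. homeomorphic_map sorgenfrey sorgenfrey h \<and> h x = y"
    using homeomorphic_map_sorgenfrey_translate[of "y - x"] by (intro exI[of _ "\<lambda>z. z + (y - x)"]) simp
qed

abbreviation sorgenfrey_plane :: "(real \<times> real) topology" where
  "sorgenfrey_plane \<equiv> prod_topology sorgenfrey sorgenfrey"

definition half_open_square :: "real \<times> real \<Rightarrow> real \<Rightarrow> (real \<times> real) set" where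
  "half_open_square p e = {fst p..<fst p + e} \<times> {snd p..<snd p + e}"

lemma mem_half_open_square:
  "q \<in> half_open_square p e \<longleftrightarrow>
     fst p \<le> fst q \<and> fst q < fst p + e \<and> snd p \<le> snd q \<and> snd q < snd p + e"
  unfolding half_open_square_def by (auto simp: mem_Times_iff)

lemma openin_sorgenfrey_plane:
  "openin sorgenfrey_plane W \<longleftrightarrow> (\<forall>p\<in>W. \<exists>e>0. half_open_square p e \<subseteq> W)"
proof
  assume W: "openin sorgenfrey_plane W"
  show "\<forall>p\<in>W. \<exists>e>0. half_open_square p e \<subseteq> W"
  proof
    fix p assume "p \<in> W"
    then have "\<exists>U V. openin sorgenfrey U \<and> openin sorgenfrey V \<and> fst p \<in> U \<and> snd p \<in> V \<and> U \<times> V \<subseteq> W"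
      using W[unfolded openin_prod_topology_alt, rule_format, of "fst p" "snd p"] by simp
    then obtain U V where UV: "openin sorgenfrey U" "openin sorgenfrey V" "fst p \<in> U" "snd p \<in> V"
      "U \<times> V \<subseteq> W"
      by blast
    obtain e1 where "e1 > 0" "{fst p..<fst p + e1} \<subseteq> U"
      using UV(1)[unfolded openin_sorgenfrey] UV(3) by blast
    moreover obtain e2 where "e2 > 0" "{snd p..<snd p + e2} \<subseteq> V"
      using UV(2)[unfolded openin_sorgenfrey] UV(4) by blast
    ultimately have "half_open_square p (min e1 e2) \<subseteq> U \<times> V"
      unfolding half_open_square_def by (intro Sigma_mono) (auto simp: subset_eq)
    then have "half_open_square p (min e1 e2) \<subseteq> W"
      using UV(5) by (rule order_trans)
    then show "\<exists>e>0. half_open_square p e \<subseteq> W"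
      using \<open>e1 > 0\<close> \<open>e2 > 0\<close> by (intro exI[of _ "min e1 e2"]) simp
  qed
next
  assume W: "\<forall>p\<in>W. \<exists>e>0. half_open_square p e \<subseteq> W"
  show "openin sorgenfrey_plane W"
    unfolding openin_prod_topology_alt
  proof (intro allI impI)
    fix x y assume "(x, y) \<in> W"
    then obtain e where "e > 0" "half_open_square (x, y) e \<subseteq> W"
      using W by blast
    then show "\<exists>U V. openin sorgenfrey U \<and> openin sorgenfrey V \<and> x \<in> U \<and> y \<in> V \<and> U \<times> V \<subseteq> W"
      unfolding half_open_square_def
      by (intro exI[of _ "{x..<x + e}"] exI[of _ "{y..<y + e}"])
        (simp add: openin_sorgenfrey_atLeastLessThan)
  qed
qed

lemma openin_half_open_square: "openin sorgenfrey_plane (half_open_square p e)"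
  unfolding half_open_square_def
  by (simp add: openin_prod_Times_iff openin_sorgenfrey_atLeastLessThan)

lemma centre_in_half_open_square: "e > 0 \<Longrightarrow> p \<in> half_open_square p e"
  by (simp add: mem_half_open_square)

lemma continuous_map_into_sorgenfrey_plane:
  assumes f: "f \<in> topspace X \<rightarrow> B"
    and squares: "\<And>x (e::real). x \<in> topspace X \<Longrightarrow> e > 0 \<Longrightarrow>
           \<exists>U. openin X U \<and> x \<in> U \<and> (\<forall>y\<in>U. f y \<in> half_open_square (f x) e)"
  shows "continuous_map X (subtopology sorgenfrey_plane B) f"
  unfolding continuous_map_eq_topcontinuous_at topcontinuous_at_def
proof (intro ballI conjI allI impI)
  show "f \<in> topspace X \<rightarrow> topspace (subtopology sorgenfrey_plane B)"
    using f by auto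
  fix x V assume x: "x \<in> topspace X" and V: "openin (subtopology sorgenfrey_plane B) V \<and> f x \<in> V"
  then obtain W where W: "openin sorgenfrey_plane W" "V = W \<inter> B"
    unfolding openin_subtopology by blast
  have "f x \<in> W" using V W(2) by blast
  then obtain e where "e > 0" and eW: "half_open_square (f x) e \<subseteq> W"
    using W(1) unfolding openin_sorgenfrey_plane by blast
  then obtain U where U: "openin X U" "x \<in> U" "\<forall>y\<in>U. f y \<in> half_open_square (f x) e"
    using squares[OF x] by blast
  have "f y \<in> V" if "y \<in> U" for y
  proof -
    have "f y \<in> B" using f openin_subset[OF U(1)] that by blast
    moreover have "f y \<in> W" using U(3) eW that by blast
    ultimately show ?thesis using W(2) by blast
  qed
  then show "\<exists>U. openin X U \<and> x \<in> U \<and> (\<forall>y\<in>U. f y \<in> V)"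
    using U(1,2) by blast
qed

lemma continuous_map_sorgenfrey_plane_subtopology:
  assumes "f ` A \<subseteq> B"
    and "\<And>p (e::real). p \<in> A \<Longrightarrow> e > 0 \<Longrightarrow>
           \<exists>d>0. \<forall>q\<in>A. q \<in> half_open_square p d \<longrightarrow> f q \<in> half_open_square (f p) e"
  shows "continuous_map (subtopology sorgenfrey_plane A) (subtopology sorgenfrey_plane B) f"
proof (rule continuous_map_into_sorgenfrey_plane)
  show "f \<in> topspace (subtopology sorgenfrey_plane A) \<rightarrow> B"
    using assms(1) by auto
  fix p and e :: real assume p: "p \<in> topspace (subtopology sorgenfrey_plane A)" and "e > 0"
  then obtain d where "d > 0" "\<forall>q\<in>A. q \<in> half_open_square p d \<longrightarrow> f q \<in> half_open_square (f p) e"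
    using assms(2)[of p e] by auto
  moreover have "openin (subtopology sorgenfrey_plane A) (half_open_square p d \<inter> A)"
    using openin_half_open_square[of p d] unfolding openin_subtopology by blast
  ultimately show "\<exists>U. openin (subtopology sorgenfrey_plane A) U \<and> p \<in> U \<and>
                      (\<forall>q\<in>U. f q \<in> half_open_square (f p) e)"
    using p centre_in_half_open_square by (intro exI[of _ "half_open_square p d \<inter> A"]) auto
qed

section \<open>Dyadic cells\<close>

definition has_dyadic :: "nat \<Rightarrow> real \<Rightarrow> real \<Rightarrow> bool" where
  "has_dyadic j a b \<longleftrightarrow> (\<exists>k::int. a < k / 2^j \<and> k / 2^j \<le> b)"

definition dyadic_level :: "real \<Rightarrow> real \<Rightarrow> nat" where
  "dyadic_level a b = (LEAST j. has_dyadic j a b)"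

definition dyadic_mesh :: "real \<Rightarrow> real \<Rightarrow> real" where
  "dyadic_mesh a b = 1 / 2 ^ dyadic_level a b"

definition dyadic_point :: "real \<Rightarrow> real \<Rightarrow> real" where
  "dyadic_point a b = \<lfloor>2 ^ dyadic_level a b * b\<rfloor> / 2 ^ dyadic_level a b"

text \<open>
  For \<open>a < b\<close>, \<^const>\<open>dyadic_point\<close> is the largest dyadic rational of the least possible level
  \<open>j\<close> in \<open>]a, b]\<close> and \<^const>\<open>dyadic_mesh\<close> is \<open>2\<^sup>-\<^sup>j\<close>; for \<open>b \<le> a\<close> the level is the junk
  value of \<^const>\<open>Least\<close> on an empty predicate.
\<close>

lemma has_dyadic_exists:
  assumes "a < b" shows "\<exists>j. has_dyadic j a b"
proof -
  obtain j where "1 / (b - a) < 2^j"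
    using real_arch_pow[of 2 "1 / (b - a)"] by auto
  then have "1 < 2^j * (b - a)"
    using assms by (simp add: field_simps)
  define k where "k = \<lfloor>2^j * b\<rfloor>"
  have "k \<le> 2^j * b" "2^j * b < k + 1"
    unfolding k_def by linarith+
  then have "a < k / 2^j" "k / 2^j \<le> b"
    using \<open>1 < 2^j * (b - a)\<close> by (simp_all add: field_simps)
  then show ?thesis
    unfolding has_dyadic_def by blast
qed

lemma has_dyadic_mono:
  assumes "has_dyadic j a b" "j \<le> j'" shows "has_dyadic j' a b"
proof -
  obtain k :: int where k: "a < k / 2^j" "k / 2^j \<le> b"
    using assms(1) unfolding has_dyadic_def by blast
  have "(2::real) ^ j' = 2^j * 2^(j' - j)"
    using assms(2) by (simp flip: power_add)
  then have "real_of_int (k * 2^(j' - j)) / 2^j' = k / 2^j"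
    by simp
  then show ?thesis
    unfolding has_dyadic_def using k by (intro exI[of _ "k * 2^(j' - j)"]) simp
qed

lemma has_dyadic_level: "a < b \<Longrightarrow> has_dyadic (dyadic_level a b) a b"
  unfolding dyadic_level_def by (rule LeastI_ex[OF has_dyadic_exists])

lemma not_has_dyadic_below_level: "j < dyadic_level a b \<Longrightarrow> \<not> has_dyadic j a b"
  unfolding dyadic_level_def by (rule not_less_Least)

lemma dyadic_mesh_pos [simp]: "dyadic_mesh a b > 0"
  unfolding dyadic_mesh_def by simp

lemma dyadic_point_bounds:
  assumes "a < b"
  shows "a < dyadic_point a b" "dyadic_point a b \<le> b" "b < dyadic_point a b + dyadic_mesh a b"
proof -
  let ?N = "(2::real) ^ dyadic_level a b"
  obtain k :: int where k: "a < k / ?N" "k / ?N \<le> b"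
    using has_dyadic_level[OF assms] unfolding has_dyadic_def by blast
  then have "k \<le> \<lfloor>?N * b\<rfloor>"
    by (simp add: field_simps le_floor_iff)
  then have "k / ?N \<le> \<lfloor>?N * b\<rfloor> / ?N"
    by (simp add: divide_right_mono)
  then show "a < dyadic_point a b"
    using k unfolding dyadic_point_def by linarith
  have "\<lfloor>?N * b\<rfloor> \<le> ?N * b" "?N * b < \<lfloor>?N * b\<rfloor> + 1"
    by linarith+
  then show "dyadic_point a b \<le> b" "b < dyadic_point a b + dyadic_mesh a b"
    unfolding dyadic_point_def dyadic_mesh_def by (simp_all add: field_simps)
qed

lemma not_has_dyadic_in_cell:
  assumes "a < b" "a \<le> a'" "dyadic_point a b \<le> b'" "b' < dyadic_point a b + dyadic_mesh a b"
    and "j < dyadic_level a b"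
  shows "\<not> has_dyadic j a' b'"
proof
  let ?L = "dyadic_level a b"
  let ?N = "(2::real) ^ ?L"
  assume "has_dyadic j a' b'"
  then obtain k :: int where k: "a' < k / 2^j" "k / 2^j \<le> b'"
    unfolding has_dyadic_def by blast
  define n where "n = k * 2^(?L - j)"
  have "?N = 2^j * 2^(?L - j)"
    using assms(5) by (simp flip: power_add)
  then have n: "real_of_int n / ?N = k / 2^j"
    unfolding n_def by simp
  show False
  proof (cases "n / ?N \<le> b")
    case True
    then have "has_dyadic j a b"
      unfolding has_dyadic_def using n k assms(2) by (intro exI[of _ k]) auto
    then show False
      using not_has_dyadic_below_level[OF assms(5)] by simp
  next
    case False
    then have "\<lfloor>?N * b\<rfloor> < n"
      by (simp add: field_simps floor_less_iff)
    moreover have "n / ?N \<le> b'"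
      using k n by simp
    then have "n \<le> ?N * b'"
      by (simp add: pos_divide_le_eq mult.commute)
    moreover have "?N * b' < \<lfloor>?N * b\<rfloor> + 1"
      using assms(4) unfolding dyadic_point_def dyadic_mesh_def by (simp add: field_simps)
    ultimately show False
      by linarith
  qed
qed

lemma dyadic_cell_stable:
  assumes "a < b" "a \<le> a'" "a' < dyadic_point a b"
    and "dyadic_point a b \<le> b'" "b' < dyadic_point a b + dyadic_mesh a b"
  shows "dyadic_level a' b' = dyadic_level a b" "dyadic_point a' b' = dyadic_point a b"
    "dyadic_mesh a' b' = dyadic_mesh a b"
proof -
  let ?L = "dyadic_level a b"
  let ?N = "(2::real) ^ ?L"
  define m where "m = \<lfloor>?N * b\<rfloor>"
  have c: "dyadic_point a b = m / ?N" and s: "dyadic_mesh a b = 1 / ?N"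
    unfolding dyadic_point_def dyadic_mesh_def m_def by simp_all
  have "has_dyadic ?L a' b'"
    unfolding has_dyadic_def using assms(3,4) c by (intro exI[of _ m]) simp
  then show level: "dyadic_level a' b' = ?L"
    unfolding dyadic_level_def[of a' b']
  proof (rule Least_equality)
    show "?L \<le> j" if "has_dyadic j a' b'" for j
      using not_has_dyadic_in_cell[OF assms(1,2,4,5)] that not_le by blast
  qed
  have "m \<le> ?N * b'" "?N * b' < m + 1"
    using assms(4,5) unfolding c s by (simp_all add: field_simps)
  then have "\<lfloor>?N * b'\<rfloor> = m"
    by linarith
  then show "dyadic_point a' b' = dyadic_point a b"
    unfolding dyadic_point_def level m_def by simp
  show "dyadic_mesh a' b' = dyadic_mesh a b"
    unfolding dyadic_mesh_def level ..
qed

lemma dyadic_cells_small_near_diagonal: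
  assumes "e > 0"
  shows "\<exists>d>0. d \<le> e / 2 \<and>
    (\<forall>a b. x \<le> a \<longrightarrow> a < b \<longrightarrow> b < x + d \<longrightarrow> dyadic_point a b + dyadic_mesh a b < x + e)"
proof -
  obtain J where "2 / e < 2^J"
    using real_arch_pow[of 2 "2 / e"] by auto
  then have J: "1 / 2^J < e / 2"
    using assms by (simp add: field_simps)
  define m where "m = \<lfloor>2^J * x\<rfloor>"
  have m: "m \<le> 2^J * x" "2^J * x < m + 1"
    unfolding m_def by linarith+
  define d where "d = min (e / 2) ((m + 1) / 2^J - x)"
  have "d > 0"
    unfolding d_def using m assms by (simp add: field_simps)
  moreover have "d \<le> e / 2"
    unfolding d_def by (rule min.cobounded1)
  moreover have "dyadic_point a b + dyadic_mesh a b < x + e"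
    if ab: "x \<le> a" "a < b" "b < x + d" for a b
  proof -
    have "\<not> has_dyadic J a b" \<comment> \<open>\<open>]a, b]\<close> lies strictly between \<open>m / 2\<^sup>J\<close> and \<open>(m + 1) / 2\<^sup>J\<close>\<close>
    proof
      assume "has_dyadic J a b"
      then obtain k :: int where k: "a < k / 2^J" "k / 2^J \<le> b"
        unfolding has_dyadic_def by blast
      then have "2^J * a < k"
        by (simp add: field_simps)
      moreover have "2^J * x \<le> 2^J * a"
        using ab(1) by simp
      ultimately have "2^J * x < k"
        by linarith
      moreover have "b < (m + 1) / 2^J"
        using ab(3) unfolding d_def by simp
      then have "k < m + 1"
        using k by (simp add: field_simps)
      ultimately show False
        using m(1) by linarith
    qed
    then have "J < dyadic_level a b"
      using has_dyadic_mono[OF has_dyadic_level[OF ab(2)]] by (meson not_less)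
    then have "dyadic_mesh a b < 1 / 2^J"
      unfolding dyadic_mesh_def by (simp add: divide_strict_left_mono)
    then show ?thesis
      using J dyadic_point_bounds(2)[OF ab(2)] ab(3) \<open>d \<le> e / 2\<close> by linarith
  qed
  ultimately show ?thesis
    by blast
qed

section \<open>Folding the half-plane onto the plane\<close>

definition upper_halfplane :: "(real \<times> real) set" where
  "upper_halfplane = {p. fst p \<le> snd p}"

definition unfold_halfplane :: "real \<times> real \<Rightarrow> real \<times> real" where
  "unfold_halfplane = (\<lambda>(a, b).
     if a < b then
       if b < dyadic_point a b + dyadic_mesh a b / 2 then (a, 2 * b - dyadic_point a b)
       else (2 * b - dyadic_point a b - dyadic_mesh a b, a)
     else (a, b))"

definition fold_plane :: "real \<times> real \<Rightarrow> real \<times> real" where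
  "fold_plane = (\<lambda>(u, v).
     if u < v then (u, (v + dyadic_point u v) / 2)
     else if v < u then (v, (u + dyadic_point v u + dyadic_mesh v u) / 2)
     else (u, v))"

lemma unfold_halfplane_on_cell:
  assumes "a < b" "a \<le> a'" "a' < dyadic_point a b"
    and "dyadic_point a b \<le> b'" "b' < dyadic_point a b + dyadic_mesh a b"
  shows "unfold_halfplane (a', b') =
    (if b' < dyadic_point a b + dyadic_mesh a b / 2 then (a', 2 * b' - dyadic_point a b)
     else (2 * b' - dyadic_point a b - dyadic_mesh a b, a'))"
  using assms dyadic_cell_stable[OF assms] unfolding unfold_halfplane_def by auto

lemma fold_plane_on_cell_above:
  assumes "u < v" "u \<le> u'" "u' < dyadic_point u v"
    and "dyadic_point u v \<le> v'" "v' < dyadic_point u v + dyadic_mesh u v"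
  shows "fold_plane (u', v') = (u', (v' + dyadic_point u v) / 2)"
  using assms dyadic_cell_stable[OF assms] unfolding fold_plane_def by auto

lemma fold_plane_on_cell_below:
  assumes "v < u" "v \<le> v'" "v' < dyadic_point v u"
    and "dyadic_point v u \<le> u'" "u' < dyadic_point v u + dyadic_mesh v u"
  shows "fold_plane (u', v') = (v', (u' + dyadic_point v u + dyadic_mesh v u) / 2)"
  using assms dyadic_cell_stable[OF assms] unfolding fold_plane_def by auto

lemma fold_unfold_halfplane:
  assumes "p \<in> upper_halfplane"
  shows "fold_plane (unfold_halfplane p) = p"
proof -
  obtain a b where p: "p = (a, b)" and "a \<le> b"
    using assms unfolding upper_halfplane_def by (cases p) auto
  show ?thesis
  proof (cases "a < b")
    case True
    let ?c = "dyadic_point a b" and ?s = "dyadic_mesh a b"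
    note bounds = dyadic_point_bounds[OF True]
    show ?thesis
    proof (cases "b < ?c + ?s / 2")
      case True
      have "unfold_halfplane (a, b) = (a, 2 * b - ?c)"
        using unfold_halfplane_on_cell[OF \<open>a < b\<close> order.refl] bounds True by simp
      moreover have "fold_plane (a, 2 * b - ?c) = (a, b)"
        using fold_plane_on_cell_above[OF \<open>a < b\<close> order.refl] bounds True by simp
      ultimately show ?thesis
        using p by simp
    next
      case False
      have "unfold_halfplane (a, b) = (2 * b - ?c - ?s, a)"
        using unfold_halfplane_on_cell[OF \<open>a < b\<close> order.refl] bounds False by simp
      moreover have "fold_plane (2 * b - ?c - ?s, a) = (a, b)"
        using fold_plane_on_cell_below[OF \<open>a < b\<close> order.refl] bounds False by simp
      ultimately show ?thesis
        using p by simp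
    qed
  qed (use p \<open>a \<le> b\<close> in \<open>simp add: unfold_halfplane_def fold_plane_def\<close>)
qed

lemma unfold_fold_plane: "unfold_halfplane (fold_plane q) = q"
proof -
  obtain u v where q: "q = (u, v)"
    by fastforce
  consider "u < v" | "v < u" | "u = v"
    by linarith
  then show ?thesis
  proof cases
    case 1
    let ?c = "dyadic_point u v" and ?s = "dyadic_mesh u v"
    note bounds = dyadic_point_bounds[OF 1]
    have "fold_plane (u, v) = (u, (v + ?c) / 2)"
      using fold_plane_on_cell_above[OF 1 order.refl] bounds by simp
    moreover have "unfold_halfplane (u, (v + ?c) / 2) = (u, v)"
      using unfold_halfplane_on_cell[OF 1 order.refl] bounds by (simp add: field_simps)
    ultimately show ?thesis
      using q by simp
  next
    case 2
    let ?c = "dyadic_point v u" and ?s = "dyadic_mesh v u"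
    note bounds = dyadic_point_bounds[OF 2]
    have "fold_plane (u, v) = (v, (u + ?c + ?s) / 2)"
      using fold_plane_on_cell_below[OF 2 order.refl] bounds by simp
    moreover have "unfold_halfplane (v, (u + ?c + ?s) / 2) = (u, v)"
      using unfold_halfplane_on_cell[OF 2 order.refl] bounds by (simp add: field_simps)
    ultimately show ?thesis
      using q by simp
  qed (simp add: q unfold_halfplane_def fold_plane_def)
qed

lemma fold_plane_in_upper_halfplane: "fold_plane q \<in> upper_halfplane"
  using dyadic_point_bounds[of "fst q" "snd q"] dyadic_point_bounds[of "snd q" "fst q"]
    dyadic_mesh_pos[of "snd q" "fst q"]
  unfolding fold_plane_def upper_halfplane_def by (auto split: prod.split)

lemma unfold_halfplane_in_cell:
  assumes "a < b"
  shows "\<exists>w. (unfold_halfplane (a, b) = (a, w) \<or> unfold_halfplane (a, b) = (w, a)) \<and>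
             dyadic_point a b \<le> w \<and> w < dyadic_point a b + dyadic_mesh a b"
  using assms dyadic_point_bounds[OF assms] unfolding unfold_halfplane_def by auto

lemma fold_plane_in_cell:
  assumes "a < b" "(u, v) = (a, b) \<or> (u, v) = (b, a)"
  shows "\<exists>w. fold_plane (u, v) = (a, w) \<and>
             dyadic_point a b \<le> w \<and> w < dyadic_point a b + dyadic_mesh a b"
  using assms(2)
proof
  assume "(u, v) = (a, b)"
  then show ?thesis
    using fold_plane_on_cell_above[OF assms(1) order.refl] dyadic_point_bounds[OF assms(1)]
    by (intro exI[of _ "(b + dyadic_point a b) / 2"]) auto
next
  assume "(u, v) = (b, a)"
  then show ?thesis
    using fold_plane_on_cell_below[OF assms(1) order.refl] dyadic_point_bounds[OF assms(1)]
      dyadic_mesh_pos[of a b]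
    by (intro exI[of _ "(b + dyadic_point a b + dyadic_mesh a b) / 2"]) auto
qed

lemma unfold_halfplane_continuous_off_diagonal:
  assumes "a < b" "e > 0"
  shows "\<exists>d>0. \<forall>q. q \<in> half_open_square (a, b) d \<longrightarrow>
           unfold_halfplane q \<in> half_open_square (unfold_halfplane (a, b)) e"
proof -
  let ?c = "dyadic_point a b" and ?s = "dyadic_mesh a b"
  note bounds = dyadic_point_bounds[OF assms(1)]
  define d where
    "d = min (?c - a) (min (if b < ?c + ?s / 2 then ?c + ?s / 2 - b else ?c + ?s - b) (e / 2))"
  have "d > 0"
    unfolding d_def using bounds assms(2) by auto
  moreover have "unfold_halfplane q \<in> half_open_square (unfold_halfplane (a, b)) e"
    if "q \<in> half_open_square (a, b) d" for q
  proof -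
    obtain a' b' where q: "q = (a', b')"
      by fastforce
    have a': "a \<le> a'" "a' < a + d" and b': "b \<le> b'" "b' < b + d"
      using that unfolding q mem_half_open_square by auto
    then have cell: "a' < ?c" "?c \<le> b'" "b' < ?c + ?s"
      and same_half: "b' < ?c + ?s / 2 \<longleftrightarrow> b < ?c + ?s / 2"
      using bounds unfolding d_def by (auto split: if_splits)
    show ?thesis
      unfolding q unfold_halfplane_on_cell[OF assms(1) a'(1) cell]
        unfold_halfplane_on_cell[OF assms(1) order.refl bounds(1,2,3)] same_half
      using a' b' unfolding d_def by (auto simp: mem_half_open_square)
  qed
  ultimately show ?thesis
    by blast
qed

lemma unfold_halfplane_continuous_diagonal:
  assumes "e > 0"
  shows "\<exists>d>0. \<forall>q\<in>upper_halfplane. q \<in> half_open_square (x, x) d \<longrightarrow>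
           unfold_halfplane q \<in> half_open_square (x, x) e"
proof -
  obtain d where "d > 0" "d \<le> e / 2" and small:
    "\<And>a b. x \<le> a \<Longrightarrow> a < b \<Longrightarrow> b < x + d \<Longrightarrow> dyadic_point a b + dyadic_mesh a b < x + e"
    using dyadic_cells_small_near_diagonal[OF assms] by blast
  moreover have "unfold_halfplane q \<in> half_open_square (x, x) e"
    if "q \<in> upper_halfplane" "q \<in> half_open_square (x, x) d" for q
  proof -
    obtain a b where q: "q = (a, b)"
      by fastforce
    have ab: "x \<le> a" "a < x + d" "x \<le> b" "b < x + d" "a \<le> b"
      using that unfolding q mem_half_open_square upper_halfplane_def by auto
    show ?thesis
    proof (cases "a < b")
      case True
      then obtain w where "unfold_halfplane (a, b) = (a, w) \<or> unfold_halfplane (a, b) = (w, a)"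
        "dyadic_point a b \<le> w" "w < dyadic_point a b + dyadic_mesh a b"
        using unfold_halfplane_in_cell by blast
      then show ?thesis
        using dyadic_point_bounds(1)[OF True] small[OF ab(1) True ab(4)] ab \<open>d \<le> e / 2\<close>
        unfolding q mem_half_open_square by auto
    next
      case False
      then show ?thesis
        using ab \<open>d \<le> e / 2\<close> unfolding q unfold_halfplane_def mem_half_open_square by auto
    qed
  qed
  ultimately show ?thesis
    by blast
qed

lemma fold_plane_continuous_above_diagonal:
  assumes "u < v" "e > 0"
  shows "\<exists>d>0. \<forall>q. q \<in> half_open_square (u, v) d \<longrightarrow>
           fold_plane q \<in> half_open_square (fold_plane (u, v)) e"
proof -
  let ?c = "dyadic_point u v" and ?s = "dyadic_mesh u v"
  note bounds = dyadic_point_bounds[OF assms(1)]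
  define d where "d = min (?c - u) (min (?c + ?s - v) e)"
  have "d > 0" "d \<le> e"
    unfolding d_def using bounds assms(2) by auto
  moreover have "fold_plane q \<in> half_open_square (fold_plane (u, v)) e"
    if "q \<in> half_open_square (u, v) d" for q
  proof -
    obtain u' v' where q: "q = (u', v')"
      by fastforce
    have u': "u \<le> u'" "u' < u + d" and v': "v \<le> v'" "v' < v + d"
      using that unfolding q mem_half_open_square by auto
    then have cell: "u' < ?c" "?c \<le> v'" "v' < ?c + ?s"
      using bounds unfolding d_def by auto
    show ?thesis
      unfolding q fold_plane_on_cell_above[OF assms(1) u'(1) cell]
        fold_plane_on_cell_above[OF assms(1) order.refl bounds]
      using u' v' \<open>d \<le> e\<close> by (auto simp: mem_half_open_square field_simps)
  qed
  ultimately show ?thesis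
    by blast
qed

lemma fold_plane_continuous_below_diagonal:
  assumes "v < u" "e > 0"
  shows "\<exists>d>0. \<forall>q. q \<in> half_open_square (u, v) d \<longrightarrow>
           fold_plane q \<in> half_open_square (fold_plane (u, v)) e"
proof -
  let ?c = "dyadic_point v u" and ?s = "dyadic_mesh v u"
  note bounds = dyadic_point_bounds[OF assms(1)]
  define d where "d = min (?c - v) (min (?c + ?s - u) e)"
  have "d > 0" "d \<le> e"
    unfolding d_def using bounds assms(2) by auto
  moreover have "fold_plane q \<in> half_open_square (fold_plane (u, v)) e"
    if "q \<in> half_open_square (u, v) d" for q
  proof -
    obtain u' v' where q: "q = (u', v')"
      by fastforce
    have u': "u \<le> u'" "u' < u + d" and v': "v \<le> v'" "v' < v + d"
      using that unfolding q mem_half_open_square by auto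
    then have cell: "v' < ?c" "?c \<le> u'" "u' < ?c + ?s"
      using bounds unfolding d_def by auto
    show ?thesis
      unfolding q fold_plane_on_cell_below[OF assms(1) v'(1) cell]
        fold_plane_on_cell_below[OF assms(1) order.refl bounds]
      using u' v' \<open>d \<le> e\<close> by (auto simp: mem_half_open_square field_simps)
  qed
  ultimately show ?thesis
    by blast
qed

lemma fold_plane_continuous_diagonal:
  assumes "e > 0"
  shows "\<exists>d>0. \<forall>q. q \<in> half_open_square (x, x) d \<longrightarrow> fold_plane q \<in> half_open_square (x, x) e"
proof -
  obtain d where "d > 0" "d \<le> e / 2" and small:
    "\<And>a b. x \<le> a \<Longrightarrow> a < b \<Longrightarrow> b < x + d \<Longrightarrow> dyadic_point a b + dyadic_mesh a b < x + e"
    using dyadic_cells_small_near_diagonal[OF assms] by blast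
  moreover have "fold_plane q \<in> half_open_square (x, x) e"
    if "q \<in> half_open_square (x, x) d" for q
  proof -
    obtain u v where q: "q = (u, v)"
      by fastforce
    have uv: "x \<le> u" "u < x + d" "x \<le> v" "v < x + d"
      using that unfolding q mem_half_open_square by auto
    define a b where "a = min u v" and "b = max u v"
    show ?thesis
    proof (cases "u = v")
      case False
      then have "a < b" "(u, v) = (a, b) \<or> (u, v) = (b, a)"
        unfolding a_def b_def by (auto simp: min_def max_def)
      then obtain w where "fold_plane (u, v) = (a, w)"
        "dyadic_point a b \<le> w" "w < dyadic_point a b + dyadic_mesh a b"
        using fold_plane_in_cell by blast
      moreover have "x \<le> a" "a < x + d" "b < x + d"
        using uv unfolding a_def b_def by auto
      ultimately show ?thesis
        using dyadic_point_bounds(1)[OF \<open>a < b\<close>] small[OF \<open>x \<le> a\<close> \<open>a < b\<close>] \<open>d \<le> e / 2\<close>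
        unfolding q mem_half_open_square by auto
    next
      case True
      then show ?thesis
        using uv \<open>d \<le> e / 2\<close> unfolding q fold_plane_def mem_half_open_square by auto
    qed
  qed
  ultimately show ?thesis
    by blast
qed

lemma continuous_map_unfold_halfplane:
  "continuous_map (subtopology sorgenfrey_plane upper_halfplane) sorgenfrey_plane unfold_halfplane"
proof -
  have "continuous_map (subtopology sorgenfrey_plane upper_halfplane)
          (subtopology sorgenfrey_plane UNIV) unfold_halfplane"
  proof (rule continuous_map_sorgenfrey_plane_subtopology)
    fix p :: "real \<times> real" and e :: real
    assume "p \<in> upper_halfplane" "e > 0"
    then obtain a b where "p = (a, b)" "a \<le> b"
      unfolding upper_halfplane_def by (cases p) auto
    then show "\<exists>d>0. \<forall>q\<in>upper_halfplane. q \<in> half_open_square p d \<longrightarrow>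
                 unfold_halfplane q \<in> half_open_square (unfold_halfplane p) e"
      using unfold_halfplane_continuous_off_diagonal[of a b e]
        unfold_halfplane_continuous_diagonal[OF \<open>e > 0\<close>, of a] \<open>e > 0\<close>
      by (cases "a < b") (auto simp: unfold_halfplane_def)
  qed simp
  then show ?thesis
    by simp
qed

lemma continuous_map_fold_plane:
  "continuous_map sorgenfrey_plane (subtopology sorgenfrey_plane upper_halfplane) fold_plane"
proof -
  have "continuous_map (subtopology sorgenfrey_plane UNIV)
          (subtopology sorgenfrey_plane upper_halfplane) fold_plane"
  proof (rule continuous_map_sorgenfrey_plane_subtopology)
    fix p :: "real \<times> real" and e :: real
    assume "e > 0"
    obtain u v where "p = (u, v)"
      by fastforce
    then show "\<exists>d>0. \<forall>q\<in>UNIV. q \<in> half_open_square p d \<longrightarrow>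
                 fold_plane q \<in> half_open_square (fold_plane p) e"
      using fold_plane_continuous_above_diagonal[of u v e]
        fold_plane_continuous_below_diagonal[of v u e]
        fold_plane_continuous_diagonal[OF \<open>e > 0\<close>, of u] \<open>e > 0\<close>
      by (cases u v rule: linorder_cases) (auto simp: fold_plane_def)
  qed (use fold_plane_in_upper_halfplane in blast)
  then show ?thesis
    by simp
qed

lemma upper_halfplane_homeomorphic_plane:
  "subtopology sorgenfrey_plane upper_halfplane homeomorphic_space sorgenfrey_plane"
proof -
  have "homeomorphic_maps (subtopology sorgenfrey_plane upper_halfplane)
          sorgenfrey_plane unfold_halfplane fold_plane"
    unfolding homeomorphic_maps_def
    using continuous_map_unfold_halfplane continuous_map_fold_plane
      fold_unfold_halfplane unfold_fold_plane by auto
  then show ?thesis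
    using homeomorphic_maps_imp_homeomorphic_space by blast
qed

section \<open>The hyperspace of sets with at most two points\<close>

lemma topspace_vietoris: "topspace (vietoris X) = {A. closedin X A}"
proof -
  have "{A. closedin X A \<and> A \<subseteq> topspace X} = {A. closedin X A}"
    using closedin_subset by blast
  then show ?thesis
    unfolding vietoris_def topology_generated_by_topspace by auto
qed

lemma openin_vietoris_upper: "openin X U \<Longrightarrow> openin (vietoris X) {A. closedin X A \<and> A \<subseteq> U}"
  unfolding vietoris_def by (rule topology_generated_by_Basis) blast

lemma openin_vietoris_lower: "openin X U \<Longrightarrow> openin (vietoris X) {A. closedin X A \<and> A \<inter> U \<noteq> {}}"
  unfolding vietoris_def by (rule topology_generated_by_Basis) blast

lemma nonempty_finite_card_le_2_iff: "A \<noteq> {} \<and> finite A \<and> card A \<le> 2 \<longleftrightarrow> (\<exists>a b. A = {a, b})"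
proof
  assume "A \<noteq> {} \<and> finite A \<and> card A \<le> 2"
  then have A: "A \<noteq> {}" "finite A" "card A \<le> 2"
    by auto
  then obtain a where "a \<in> A"
    by blast
  show "\<exists>a b. A = {a, b}"
  proof (cases "A - {a} = {}")
    case True
    then have "A = {a, a}"
      using \<open>a \<in> A\<close> by blast
    then show ?thesis
      by blast
  next
    case False
    then obtain b where "b \<in> A - {a}"
      by blast
    moreover have "card (A - {a}) \<le> Suc 0"
      using A \<open>a \<in> A\<close> by (simp add: card_Diff_singleton)
    ultimately have "A - {a} = {b}"
      using A(2) card_le_Suc0_iff_eq[of "A - {a}"] by blast
    then have "A = {a, b}"
      using \<open>a \<in> A\<close> by blast
    then show ?thesis
      by blast
  qed
next
  assume "\<exists>a b. A = {a, b}"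
  then show "A \<noteq> {} \<and> finite A \<and> card A \<le> 2"
    by (auto simp: card_insert_if)
qed

lemma closedin_t1_doubleton:
  "t1_space X \<Longrightarrow> a \<in> topspace X \<Longrightarrow> b \<in> topspace X \<Longrightarrow> closedin X {a, b}"
  unfolding t1_space_closedin_finite by simp

lemma topspace_F2:
  assumes "t1_space X"
  shows "topspace (F2 X) = {{a, b} | a b. a \<in> topspace X \<and> b \<in> topspace X}"
proof (intro equalityI subsetI)
  fix A assume "A \<in> topspace (F2 X)"
  then have "A \<subseteq> topspace X" "A \<noteq> {} \<and> finite A \<and> card A \<le> 2"
    unfolding F2_def by auto
  then have "A \<subseteq> topspace X" "\<exists>a b. A = {a, b}"
    using nonempty_finite_card_le_2_iff[of A] by blast+
  then show "A \<in> {{a, b} | a b. a \<in> topspace X \<and> b \<in> topspace X}"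
    by blast
next
  fix A assume "A \<in> {{a, b} | a b. a \<in> topspace X \<and> b \<in> topspace X}"
  then obtain a b where A: "A = {a, b}" "a \<in> topspace X" "b \<in> topspace X"
    by blast
  then have "closedin X A"
    using closedin_t1_doubleton[OF assms] by simp
  moreover have "A \<noteq> {} \<and> finite A \<and> card A \<le> 2"
    using A(1) nonempty_finite_card_le_2_iff[of A] by blast
  ultimately show "A \<in> topspace (F2 X)"
    unfolding F2_def topspace_subtopology topspace_vietoris using A by auto
qed

lemma continuous_map_doubleton_vietoris:
  assumes "t1_space X"
  shows "continuous_map (prod_topology X X) (vietoris X) (\<lambda>(a, b). {a, b})"
  unfolding vietoris_def
proof (rule continuous_on_generated_topo)
  note closed = closedin_t1_doubleton[OF assms]
  fix W
  assume "W \<in> {{A. closedin X A \<and> A \<subseteq> U} | U. openin X U} \<union>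
              {{A. closedin X A \<and> A \<inter> U \<noteq> {}} | U. openin X U}"
  then consider U where "openin X U" "W = {A. closedin X A \<and> A \<subseteq> U}"
    | U where "openin X U" "W = {A. closedin X A \<and> A \<inter> U \<noteq> {}}"
    by blast
  then show "openin (prod_topology X X) ((\<lambda>(a, b). {a, b}) -` W \<inter> topspace (prod_topology X X))"
  proof cases
    case 1
    then have "U \<subseteq> topspace X"
      by (simp add: openin_subset)
    then have "(\<lambda>(a, b). {a, b}) -` W \<inter> topspace (prod_topology X X) = U \<times> U"
      using 1(2) closed by auto
    then show ?thesis
      using 1(1) by (simp add: openin_prod_Times_iff)
  next
    case 2
    then have "U \<subseteq> topspace X"
      by (simp add: openin_subset)
    then have "(\<lambda>(a, b). {a, b}) -` W \<inter> topspace (prod_topology X X) =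
                 U \<times> topspace X \<union> topspace X \<times> U"
      using 2(2) closed by auto
    then show ?thesis
      using 2(1) by (simp add: openin_Un openin_prod_Times_iff)
  qed
next
  have "{A. closedin X A \<and> A \<subseteq> topspace X} \<in> {{A. closedin X A \<and> A \<subseteq> U} | U. openin X U}"
    by blast
  then show "(\<lambda>(a, b). {a, b}) ` topspace (prod_topology X X) \<subseteq>
          \<Union> ({{A. closedin X A \<and> A \<subseteq> U} | U. openin X U} \<union>
             {{A. closedin X A \<and> A \<inter> U \<noteq> {}} | U. openin X U})"
    using closedin_t1_doubleton[OF assms] by auto
qed

lemma continuous_map_doubleton_F2:
  assumes "t1_space X"
  shows "continuous_map (prod_topology X X) (F2 X) (\<lambda>(a, b). {a, b})"
proof -
  have "(\<lambda>(a, b). {a, b}) \<in> topspace (prod_topology X X) \<rightarrow>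
          {A. A \<subseteq> topspace X \<and> A \<noteq> {} \<and> finite A \<and> card A \<le> 2}"
    by (auto simp: card_insert_if)
  then show ?thesis
    using continuous_map_doubleton_vietoris[OF assms]
    unfolding F2_def by (simp add: continuous_map_in_subtopology)
qed

lemma openin_F2_Int_topspace:
  "openin (vietoris X) W \<Longrightarrow> openin (F2 X) (W \<inter> topspace (F2 X))"
  using openin_subtopology_Int[of "vietoris X" W "topspace (F2 X)"]
  unfolding F2_def topspace_subtopology subtopology_restrict by blast

lemma topspace_F2_sorgenfrey:
  "topspace (F2 sorgenfrey) = {{a, b} | a b :: real. a \<le> b}"
proof -
  have "{a, b} = {min a b, max a b} \<and> min a b \<le> max a b" for a b :: real
    by (auto simp: min_def max_def)
  then show ?thesis
    unfolding topspace_F2[OF t1_space_sorgenfrey] topspace_sorgenfrey by blast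
qed

lemma continuous_map_F2_sorgenfrey_Min_Max:
  "continuous_map (F2 sorgenfrey) (subtopology sorgenfrey_plane upper_halfplane) (\<lambda>A. (Min A, Max A))"
proof (rule continuous_map_into_sorgenfrey_plane)
  show "(\<lambda>A. (Min A, Max A)) \<in> topspace (F2 sorgenfrey) \<rightarrow> upper_halfplane"
    unfolding topspace_F2_sorgenfrey upper_halfplane_def by auto
  fix A and e :: real
  assume A_in: "A \<in> topspace (F2 sorgenfrey)" and "e > 0"
  then obtain a b where A: "A = {a, b}" "a \<le> b"
    unfolding topspace_F2_sorgenfrey by blast
  define I J where "I = {a..<a + e}" and "J = {b..<b + e}"
  define W where "W = {B. closedin sorgenfrey B \<and> B \<subseteq> I \<union> J} \<inter>
    {B. closedin sorgenfrey B \<and> B \<inter> I \<noteq> {}} \<inter> {B. closedin sorgenfrey B \<and> B \<inter> J \<noteq> {}}"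
  have "openin (vietoris sorgenfrey) W"
    unfolding W_def I_def J_def
    by (intro openin_Int openin_vietoris_upper openin_vietoris_lower openin_Un
        openin_sorgenfrey_atLeastLessThan)
  then have "openin (F2 sorgenfrey) (W \<inter> topspace (F2 sorgenfrey))"
    by (rule openin_F2_Int_topspace)
  moreover have "closedin sorgenfrey A"
    using closedin_t1_doubleton[OF t1_space_sorgenfrey] A(1) by simp
  then have "A \<in> W \<inter> topspace (F2 sorgenfrey)"
    using A_in \<open>e > 0\<close> unfolding W_def A I_def J_def by auto
  moreover have "(Min B, Max B) \<in> half_open_square (Min A, Max A) e"
    if B_in: "B \<in> W \<inter> topspace (F2 sorgenfrey)" for B
  proof -
    obtain a' b' where B: "B = {a', b'}" "a' \<le> b'"
      using B_in unfolding topspace_F2_sorgenfrey by blast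
    have "a' \<in> I \<union> J" "b' \<in> I \<union> J" "a' \<in> I \<or> b' \<in> I" "a' \<in> J \<or> b' \<in> J"
      using B_in unfolding W_def B(1) by auto
    then show ?thesis
      using A B unfolding I_def J_def mem_half_open_square by auto
  qed
  ultimately show "\<exists>U. openin (F2 sorgenfrey) U \<and> A \<in> U \<and>
                     (\<forall>B\<in>U. (Min B, Max B) \<in> half_open_square (Min A, Max A) e)"
    by blast
qed

lemma F2_sorgenfrey_homeomorphic_upper_halfplane:
  "F2 sorgenfrey homeomorphic_space subtopology sorgenfrey_plane upper_halfplane"
proof -
  have "continuous_map (subtopology sorgenfrey_plane upper_halfplane) (F2 sorgenfrey)
          (\<lambda>(a, b). {a, b})"
    using continuous_map_doubleton_F2[OF t1_space_sorgenfrey] by (rule continuous_map_from_subtopology)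
  then have "homeomorphic_maps (F2 sorgenfrey) (subtopology sorgenfrey_plane upper_halfplane)
               (\<lambda>A. (Min A, Max A)) (\<lambda>(a, b). {a, b})"
    unfolding homeomorphic_maps_def topspace_F2_sorgenfrey
    using continuous_map_F2_sorgenfrey_Min_Max
    by (auto simp: upper_halfplane_def min_def max_def)
  then show ?thesis
    using homeomorphic_maps_imp_homeomorphic_space by blast
qed

theorem theorem1p2:
  shows "F2 sorgenfrey homeomorphic_space prod_topology sorgenfrey sorgenfrey
         \<and> homogeneous_space (F2 sorgenfrey)"
proof -
  have "F2 sorgenfrey homeomorphic_space sorgenfrey_plane"
    using F2_sorgenfrey_homeomorphic_upper_halfplane upper_halfplane_homeomorphic_plane
    by (rule homeomorphic_space_trans)
  moreover have "homogeneous_space sorgenfrey_plane"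
    using homogeneous_space_sorgenfrey homogeneous_space_sorgenfrey
    by (rule homogeneous_space_prod_topology)
  ultimately show ?thesis
    using homogeneous_space_homeomorphic by blast
qed

end
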